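(* For $s_1,s_2\in\mathbb{Z}_{\ge0}$ and integers $n_1,n_2\ge1$: \begin{align*} ((\mathcal{T}*\phi)^{n_2-n_1}*\mathcal{T})(s_2,s_1)&=\Gamma(n_1,-\tfrac12,s_1;n_2,\tfrac12,s_2)\quad(n_1\le n_2),\\ (\mathcal{T}*\phi)^{n_2-n_1}(s_2,s_1)&=\Gamma(n_1,\tfrac12,s_1;n_2,\tfrac12,s_2)\quad(n_1<n_2),\\ ((\phi*\mathcal{T})^{n_2-n_1-1}*\phi)(s_2,s_1)&=\Gamma(n_1,\tfrac12,s_1;n_2,-\tfrac12,s_2)\quad(n_1<n_2),\\ (\phi*\mathcal{T})^{n_2-n_1}(s_2,s_1)&=\Gamma(n_1,-\tfrac12,s_1;n_2,-\tfrac12,s_2)\quad(n_1<n_2). \end{align*}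
   Context: Matrices on $\mathbb{Z}_{\ge0}\times\mathbb{Z}_{\ge0}$: $\mathcal{T}(x,y)=0$ if $x<y$, $1$ if $x\ge y=0$, $2$ if $x\ge y>0$; $\phi(x,y)=1$ if $x>y$, $0$ otherwise; $(f*g)(x,y)=\sum_{z\ge0}f(x,z)g(z,y)$, and the $0$-th power is the identity. $\mathsf{J}^{(-1/2,-1/2)}_s(\cos\theta)=\cos s\theta$, $\mathsf{J}^{(1/2,-1/2)}_s(\cos\theta)=\sin((s+\frac12)\theta)/\sin(\theta/2)$; $W^{(-1/2,-1/2)}(0)=1$, $W^{(-1/2,-1/2)}(s)=2$ ($s>0$), $W^{(1/2,-1/2)}\equiv1$. For $a_1,a_2\in\{\pm\frac12\}$ with $2n_1+a_1<2n_2+a_2$, \[\Gamma(n_1,a_1,s_1;n_2,a_2,s_2)=-\frac{W^{(a_1,-1/2)}(s_1)}{\pi}\frac1{2\pi i}\int_{-1}^1\oint\mathsf{J}^{(a_1,-1/2)}_{s_1}(x)\mathsf{J}^{(a_2,-1/2)}_{s_2}(u)(u-1)^{n_1-n_2}\frac{(1-x)^{a_1}(1+x)^{-1/2}}{x-u}\,du\,dx,\] where the $u$-contour is a positively oriented simple loop containing $[-1,1]$. *)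

theory Defs
  imports "HOL-Complex_Analysis.Complex_Analysis" "HOL-Computational_Algebra.Polynomial"
begin

definition matT :: "nat \<Rightarrow> nat \<Rightarrow> real" where
  "matT x y = (if x < y then 0 else if y = 0 then 1 else 2)"

definition matPhi :: "nat \<Rightarrow> nat \<Rightarrow> real" where
  "matPhi x y = (if x > y then 1 else 0)"

definition mconv :: "(nat \<Rightarrow> nat \<Rightarrow> real) \<Rightarrow> (nat \<Rightarrow> nat \<Rightarrow> real) \<Rightarrow> nat \<Rightarrow> nat \<Rightarrow> real" where
  "mconv f g x y = (\<Sum>\<^sub>\<infinity> z\<in>(UNIV::nat set). f x z * g z y)"

definition midentity :: "nat \<Rightarrow> nat \<Rightarrow> real" where
  "midentity x y = (if x = y then 1 else 0)"

fun mpow :: "(nat \<Rightarrow> nat \<Rightarrow> real) \<Rightarrow> nat \<Rightarrow> nat \<Rightarrow> nat \<Rightarrow> real" where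
  "mpow f 0 = midentity"
| "mpow f (Suc n) = mconv (mpow f n) f"

text \<open>Jacobi polynomials J^{(a,-1/2)}_s for a = -1/2 (Chebyshev first kind) and a = 1/2,
  defined as the polynomial determined by its values at cos theta.\<close>

definition jac_poly :: "real \<Rightarrow> nat \<Rightarrow> complex poly" where
  "jac_poly a s = (if a = -1/2
     then (THE p. \<forall>\<theta>::real. poly p (complex_of_real (cos \<theta>)) = complex_of_real (cos (real s * \<theta>)))
     else (THE p. \<forall>\<theta>::real. sin (\<theta>/2) \<noteq> 0 \<longrightarrow>
             poly p (complex_of_real (cos \<theta>)) = complex_of_real (sin ((real s + 1/2) * \<theta>) / sin (\<theta>/2))))"

definition J :: "real \<Rightarrow> nat \<Rightarrow> complex \<Rightarrow> complex" where
  "J a s z = poly (jac_poly a s) z"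

definition Wt :: "real \<Rightarrow> nat \<Rightarrow> real" where
  "Wt a s = (if a = -1/2 then (if s = 0 then 1 else 2) else 1)"

definition good_loop :: "(real \<Rightarrow> complex) \<Rightarrow> bool" where
  "good_loop \<gamma> \<longleftrightarrow> valid_path \<gamma> \<and> simple_path \<gamma> \<and> pathfinish \<gamma> = pathstart \<gamma> \<and>
     (\<forall>x::real\<in>{-1..1}. complex_of_real x \<notin> path_image \<gamma> \<and>
        winding_number \<gamma> (complex_of_real x) = 1)"

definition Gam :: "(real \<Rightarrow> complex) \<Rightarrow> nat \<Rightarrow> real \<Rightarrow> nat \<Rightarrow> nat \<Rightarrow> real \<Rightarrow> nat \<Rightarrow> complex" where
  "Gam \<gamma> n1 a1 s1 n2 a2 s2 =
     - complex_of_real (Wt a1 s1 / pi) * (1 / (2 * complex_of_real pi * \<i>)) *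
     integral {-1..1::real} (\<lambda>x. contour_integral \<gamma> (\<lambda>u.
        J a1 s1 (complex_of_real x) * J a2 s2 u * (u - 1) powi (int n1 - int n2) *
        complex_of_real ((1 - x) powr a1 * (1 + x) powr (-1/2)) / (complex_of_real x - u)))"

end

theory Submission
  imports Defs
begin

text \<open>For \<open>x\<close> in \<open>(-1, 1)\<close> the \<open>u\<close>-integral only sees the polynomial part of
  \<open>J\<^sub>s\<^sub>2(u) / (u - 1)^m\<close>, where \<open>m = n\<^sub>2 - n\<^sub>1\<close>: by Cauchy's formula it is \<open>-2\<pi>i\<close> times
  the \<open>m\<close>-fold synthetic division of \<open>J\<^sub>s\<^sub>2\<close> by \<open>u - 1\<close>, evaluated at \<open>x\<close>.
  Synthetic division by \<open>u - 1\<close> sends \<open>cos s\<theta>\<close> to \<open>\<Sum>\<^sub>k \<phi>(s,k) J\<^sup>(\<^sup>1\<^sup>/\<^sup>2\<^sup>)\<^sub>k\<close>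
  (a telescoping sum of Dirichlet kernels), while \<open>J\<^sup>(\<^sup>1\<^sup>/\<^sup>2\<^sup>)\<^sub>s = \<Sum>\<^sub>k T(s,k) cos k\<theta>\<close>;
  so the \<open>m\<close>-fold quotient is row \<open>s\<^sub>2\<close> of the matching matrix product, expanded in the
  family \<open>J\<^sup>(\<^sup>a\<^sup>1\<^sup>)\<close>. Orthogonality of that family for the weight
  \<open>(1-x)^a\<^sub>1 (1+x)^(-1/2)\<close>, with squared norms \<open>\<pi>/W\<close>, then extracts the entry \<open>(s\<^sub>2, s\<^sub>1)\<close>.\<close>

section \<open>Lower triangular matrices acting on polynomial families\<close>

definition lower_triangular :: "(nat \<Rightarrow> nat \<Rightarrow> real) \<Rightarrow> bool" where
  "lower_triangular M \<longleftrightarrow> (\<forall>x z. x < z \<longrightarrow> M x z = 0)"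

lemma mconv_lower_triangular:
  assumes "lower_triangular f"
  shows "mconv f g x y = (\<Sum>z\<le>x. f x z * g z y)"
proof -
  have "mconv f g x y = (\<Sum>\<^sub>\<infinity>z\<in>{..x}. f x z * g z y)"
    unfolding mconv_def
    by (rule infsum_cong_neutral) (use assms in \<open>auto simp: lower_triangular_def\<close>)
  then show ?thesis by simp
qed

lemma lower_triangular_mconv [simp, intro]:
  assumes "lower_triangular f" "lower_triangular g"
  shows "lower_triangular (mconv f g)"
  using assms by (auto simp: lower_triangular_def mconv_lower_triangular intro!: sum.neutral)

lemma lower_triangular_matT [simp, intro]: "lower_triangular matT"
  by (auto simp: lower_triangular_def matT_def)

lemma lower_triangular_matPhi [simp, intro]: "lower_triangular matPhi"
  by (auto simp: lower_triangular_def matPhi_def)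

lemma lower_triangular_midentity [simp, intro]: "lower_triangular midentity"
  by (auto simp: lower_triangular_def midentity_def)

lemma lower_triangular_mpow [simp, intro]: "lower_triangular f \<Longrightarrow> lower_triangular (mpow f n)"
  by (induction n) auto

lemma smult_sum_right: "smult c (\<Sum>i\<in>A. f i) = (\<Sum>i\<in>A. smult c (f i))"
  by (induction A rule: infinite_finite_induct) (auto simp: smult_add_right)

definition row_combination ::
    "(nat \<Rightarrow> complex poly) \<Rightarrow> (nat \<Rightarrow> nat \<Rightarrow> real) \<Rightarrow> nat \<Rightarrow> complex poly" where
  "row_combination B M s = (\<Sum>k\<le>s. smult (of_real (M s k)) (B k))"

lemma poly_row_combination:
  "poly (row_combination B M s) z = (\<Sum>k\<le>s. of_real (M s k) * poly (B k) z)"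
  by (simp add: row_combination_def poly_sum)

lemma row_combination_midentity: "row_combination B midentity s = B s"
proof -
  have "row_combination B midentity s = (\<Sum>k\<in>{s}. smult (of_real (midentity s k)) (B k))"
    unfolding row_combination_def
    by (rule sum.mono_neutral_right) (auto simp: midentity_def)
  then show ?thesis by (simp add: midentity_def)
qed

lemma row_combination_row_combination:
  assumes M: "lower_triangular M" and N: "lower_triangular N"
  shows "row_combination (row_combination B N) M s = row_combination B (mconv M N) s"
proof -
  have "row_combination (row_combination B N) M s
      = (\<Sum>k\<le>s. \<Sum>j\<le>s. smult (of_real (M s k * N k j)) (B j))"
    unfolding row_combination_def
  proof (rule sum.cong[OF refl])
    fix k assume "k \<in> {..s}"
    then have "(\<Sum>j\<le>k. smult (of_real (N k j)) (B j)) = (\<Sum>j\<le>s. smult (of_real (N k j)) (B j))"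
      by (intro sum.mono_neutral_left) (use N in \<open>auto simp: lower_triangular_def\<close>)
    then show "smult (of_real (M s k)) (\<Sum>j\<le>k. smult (of_real (N k j)) (B j))
        = (\<Sum>j\<le>s. smult (of_real (M s k * N k j)) (B j))"
      by (simp add: smult_sum_right smult_smult)
  qed
  also have "\<dots> = (\<Sum>j\<le>s. \<Sum>k\<le>s. smult (of_real (M s k * N k j)) (B j))"
    by (rule sum.swap)
  also have "\<dots> = row_combination B (mconv M N) s"
    unfolding row_combination_def
    by (rule sum.cong[OF refl]) (simp add: mconv_lower_triangular[OF M] smult_sum[symmetric])
  finally show ?thesis .
qed

section \<open>Synthetic division\<close>

lemma synthetic_div_eqI:
  fixes p q :: "'a::comm_ring_1 poly"
  assumes "p = [:-c, 1:] * q + [:r:]"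
  shows "synthetic_div p c = q"
proof -
  have "p + smult c q = pCons r q"
    unfolding assms by (simp add: mult_pCons_left algebra_simps)
  from synthetic_div_unique[OF this] show ?thesis by simp
qed

lemma synthetic_div_add:
  fixes p q :: "'a::comm_ring_1 poly"
  shows "synthetic_div (p + q) c = synthetic_div p c + synthetic_div q c"
proof (rule synthetic_div_eqI)
  show "p + q = [:-c, 1:] * (synthetic_div p c + synthetic_div q c) + [:poly p c + poly q c:]"
    by (subst (1 2) synthetic_div_correct'[of c, symmetric]) (simp add: algebra_simps)
qed

lemma synthetic_div_smult:
  fixes p :: "'a::comm_ring_1 poly"
  shows "synthetic_div (smult a p) c = smult a (synthetic_div p c)"
proof (rule synthetic_div_eqI)
  show "smult a p = [:-c, 1:] * smult a (synthetic_div p c) + [:a * poly p c:]"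
    by (subst (1) synthetic_div_correct'[of c, symmetric]) (simp add: smult_add_right)
qed

lemma synthetic_div_sum:
  fixes f :: "'b \<Rightarrow> 'a::comm_ring_1 poly"
  shows "synthetic_div (\<Sum>k\<in>A. f k) c = (\<Sum>k\<in>A. synthetic_div (f k) c)"
  by (induction A rule: infinite_finite_induct) (auto simp: synthetic_div_add)

lemma synthetic_div_row_combination:
  "synthetic_div (row_combination B M s) c = row_combination (\<lambda>k. synthetic_div (B k) c) M s"
  by (simp add: row_combination_def synthetic_div_sum synthetic_div_smult)

lemma funpow_synthetic_div_row_combination:
  assumes M: "lower_triangular M" and div: "\<And>k. synthetic_div (B k) c = row_combination B M k"
  shows "((\<lambda>p. synthetic_div p c) ^^ m) (B s) = row_combination B (mpow M m) s"
proof (induction m)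
  case 0
  show ?case by (simp add: row_combination_midentity)
next
  case (Suc m)
  have "((\<lambda>p. synthetic_div p c) ^^ Suc m) (B s)
      = row_combination (row_combination B M) (mpow M m) s"
    using Suc.IH by (simp add: synthetic_div_row_combination div)
  also have "\<dots> = row_combination B (mpow M (Suc m)) s"
    using M by (simp add: row_combination_row_combination)
  finally show ?case .
qed

section \<open>The two Jacobi families\<close>

fun chebyshev :: "nat \<Rightarrow> complex poly" where
  "chebyshev 0 = 1"
| "chebyshev (Suc 0) = [:0, 1:]"
| "chebyshev (Suc (Suc n)) = [:0, 2:] * chebyshev (Suc n) - chebyshev n"

lemma poly_chebyshev_cos: "poly (chebyshev n) (of_real (cos t)) = of_real (cos (real n * t))"
proof (induction n rule: chebyshev.induct)
  case (3 n)
  have "cos (real (Suc (Suc n)) * t) = 2 * cos t * cos (real (Suc n) * t) - cos (real n * t)"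
  proof -
    have "real (Suc (Suc n)) * t = real (Suc n) * t + t" "real n * t = real (Suc n) * t - t"
      by (simp_all add: algebra_simps)
    then show ?thesis by (simp only: cos_add cos_diff) simp
  qed
  then show ?case using 3 by simp
qed auto

lemma dirichlet_kernel:
  "sin (t/2) * (1 + 2 * (\<Sum>k=1..s. cos (real k * t))) = sin ((real s + 1/2) * t)"
proof (induction s)
  case (Suc s)
  have "(real (Suc s) + 1/2) * t = real (Suc s) * t + t/2" "(real s + 1/2) * t = real (Suc s) * t - t/2"
    by (simp_all add: algebra_simps)
  then have "sin (t/2) * (2 * cos (real (Suc s) * t)) = sin ((real (Suc s) + 1/2) * t) - sin ((real s + 1/2) * t)"
    by (simp only: sin_add sin_diff) simp
  then show ?case using Suc by (simp add: algebra_simps)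
qed simp

lemma poly_row_combination_chebyshev_matT_cos:
  assumes "sin (t/2) \<noteq> 0"
  shows "poly (row_combination chebyshev matT s) (of_real (cos t)) = of_real (sin ((real s + 1/2) * t) / sin (t/2))"
proof -
  have "(\<Sum>k\<le>s. matT s k * cos (real k * t)) = 1 + 2 * (\<Sum>k=1..s. cos (real k * t))"
  proof -
    have "{..s} = insert 0 {1..s}" by auto
    then have "(\<Sum>k\<le>s. matT s k * cos (real k * t)) = 1 + (\<Sum>k=1..s. matT s k * cos (real k * t))"
      by (simp add: matT_def)
    also have "(\<Sum>k=1..s. matT s k * cos (real k * t)) = (\<Sum>k=1..s. 2 * cos (real k * t))"
      by (rule sum.cong) (auto simp: matT_def)
    finally show ?thesis by (simp add: sum_distrib_left)
  qed
  also have "\<dots> = sin ((real s + 1/2) * t) / sin (t/2)"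
    using dirichlet_kernel[of t s] assms by (simp add: field_simps)
  finally show ?thesis
    by (simp add: poly_row_combination poly_chebyshev_cos flip: of_real_mult of_real_sum)
qed

lemma poly_eqI_on_cos:
  fixes p q :: "complex poly"
  assumes "\<And>t. t \<in> {0<..<pi} \<Longrightarrow> poly p (of_real (cos t)) = poly q (of_real (cos t))"
  shows "p = q"
proof (rule ccontr)
  assume "p \<noteq> q"
  then have "finite {z. poly (p - q) z = 0}"
    by (intro poly_roots_finite) simp
  moreover have "of_real ` {-1<..<1} \<subseteq> {z. poly (p - q) z = 0}"
  proof
    fix z :: complex assume "z \<in> of_real ` {-1<..<1}"
    then obtain x where x: "x \<in> {-1<..<1}" "z = of_real x" by auto
    then have "arccos x \<in> {0<..<pi}" "cos (arccos x) = x"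
      using arccos_lt_bounded by auto
    then show "z \<in> {z. poly (p - q) z = 0}" using assms[of "arccos x"] x by auto
  qed
  ultimately have "finite (of_real ` {-1<..<1::real} :: complex set)"
    by (rule finite_subset[rotated])
  then have "finite {-1<..<1::real}"
    by (rule finite_imageD) (simp add: inj_on_def)
  then show False using infinite_Ioo[of "-1::real" 1] by simp
qed

lemma jac_poly_mhalf: "jac_poly (-1/2) = chebyshev"
proof
  fix s
  show "jac_poly (-1/2) s = chebyshev s"
    unfolding jac_poly_def
    by (simp, rule the_equality) (auto simp: poly_chebyshev_cos intro!: poly_eqI_on_cos)
qed

lemma jac_poly_half: "jac_poly (1/2) = row_combination (jac_poly (-1/2)) matT"
proof
  fix s
  have "(THE p. \<forall>\<theta>. sin (\<theta>/2) \<noteq> 0 \<longrightarrow> poly p (of_real (cos \<theta>))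
          = of_real (sin ((real s + 1/2) * \<theta>) / sin (\<theta>/2))) = row_combination chebyshev matT s"
  proof (rule the_equality)
    fix p :: "complex poly"
    assume p: "\<forall>\<theta>. sin (\<theta>/2) \<noteq> 0 \<longrightarrow> poly p (of_real (cos \<theta>))
          = of_real (sin ((real s + 1/2) * \<theta>) / sin (\<theta>/2))"
    show "p = row_combination chebyshev matT s"
    proof (rule poly_eqI_on_cos)
      fix t :: real assume "t \<in> {0<..<pi}"
      then have "sin (t/2) \<noteq> 0" using sin_gt_zero[of "t/2"] by auto
      then show "poly p (of_real (cos t)) = poly (row_combination chebyshev matT s) (of_real (cos t))"
        using p poly_row_combination_chebyshev_matT_cos by simp
    qed
  qed (use poly_row_combination_chebyshev_matT_cos in blast)
  then show "jac_poly (1/2) s = row_combination (jac_poly (-1/2)) matT s"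
    unfolding jac_poly_mhalf by (simp add: jac_poly_def)
qed

lemma poly_jac_poly_half_cos:
  assumes "sin (t/2) \<noteq> 0"
  shows "poly (jac_poly (1/2) s) (of_real (cos t)) = of_real (sin ((real s + 1/2) * t) / sin (t/2))"
  using poly_row_combination_chebyshev_matT_cos[OF assms]
  unfolding jac_poly_half jac_poly_mhalf .

lemma cos_Suc_minus_cos:
  assumes "sin (t/2) \<noteq> 0"
  shows "(cos t - 1) * (sin ((real k + 1/2) * t) / sin (t/2)) = cos (real (Suc k) * t) - cos (real k * t)"
proof -
  have "real (Suc k) * t = (real k + 1/2) * t + t/2" "real k * t = (real k + 1/2) * t - t/2"
    by (simp_all add: algebra_simps)
  moreover have "cos t = 1 - 2 * (sin (t/2))\<^sup>2"
    using cos_double_sin[of "t/2"] by simp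
  ultimately show ?thesis
    using assms by (simp only: cos_add cos_diff) (simp add: field_simps power2_eq_square)
qed

lemma synthetic_div_jac_poly_mhalf:
  "synthetic_div (jac_poly (-1/2) s) 1 = row_combination (jac_poly (1/2)) matPhi s"
proof (rule synthetic_div_eqI[where r = 1], rule poly_eqI_on_cos)
  fix t :: real assume "t \<in> {0<..<pi}"
  then have t: "sin (t/2) \<noteq> 0" using sin_gt_zero[of "t/2"] by auto
  have "(\<Sum>k\<le>s. of_real (matPhi s k) * poly (jac_poly (1/2) k) (of_real (cos t)))
      = (\<Sum>k<s. poly (jac_poly (1/2) k) (of_real (cos t)) :: complex)"
    by (rule sum.mono_neutral_cong_right) (auto simp: matPhi_def)
  also have "\<dots> = of_real (\<Sum>k<s. sin ((real k + 1/2) * t) / sin (t/2))"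
    by (simp add: poly_jac_poly_half_cos[OF t])
  finally have "poly ([:-1, 1:] * row_combination (jac_poly (1/2)) matPhi s + [:1:]) (of_real (cos t))
      = of_real ((cos t - 1) * (\<Sum>k<s. sin ((real k + 1/2) * t) / sin (t/2)) + 1)"
    by (simp add: poly_row_combination algebra_simps)
  also have "(cos t - 1) * (\<Sum>k<s. sin ((real k + 1/2) * t) / sin (t/2)) = cos (real s * t) - 1"
    unfolding sum_distrib_left cos_Suc_minus_cos[OF t] sum_lessThan_telescope[of "\<lambda>k. cos (real k * t)"] by simp
  finally show "poly (jac_poly (-1/2) s) (of_real (cos t))
      = poly ([:-1, 1:] * row_combination (jac_poly (1/2)) matPhi s + [:1:]) (of_real (cos t))"
    unfolding jac_poly_mhalf by (simp add: poly_chebyshev_cos)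
qed

lemma synthetic_div_jac_poly_half:
  "synthetic_div (jac_poly (1/2) s) 1 = row_combination (jac_poly (1/2)) (mconv matT matPhi) s"
proof -
  have "synthetic_div (jac_poly (1/2) s) 1 = row_combination (\<lambda>k. synthetic_div (jac_poly (-1/2) k) 1) matT s"
    by (simp only: jac_poly_half synthetic_div_row_combination)
  also have "\<dots> = row_combination (row_combination (jac_poly (1/2)) matPhi) matT s"
    by (simp only: synthetic_div_jac_poly_mhalf)
  also have "\<dots> = row_combination (jac_poly (1/2)) (mconv matT matPhi) s"
    by (rule row_combination_row_combination) auto
  finally show ?thesis .
qed

lemma synthetic_div_jac_poly_mhalf_self:
  "synthetic_div (jac_poly (-1/2) s) 1 = row_combination (jac_poly (-1/2)) (mconv matPhi matT) s"
proof -
  have "synthetic_div (jac_poly (-1/2) s) 1 = row_combination (row_combination (jac_poly (-1/2)) matT) matPhi s"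
    by (simp only: synthetic_div_jac_poly_mhalf jac_poly_half)
  also have "\<dots> = row_combination (jac_poly (-1/2)) (mconv matPhi matT) s"
    by (rule row_combination_row_combination) auto
  finally show ?thesis .
qed

lemma funpow_synthetic_div_jac_poly_half:
  "((\<lambda>p. synthetic_div p 1) ^^ m) (jac_poly (1/2) s)
     = row_combination (jac_poly (1/2)) (mpow (mconv matT matPhi) m) s"
  by (rule funpow_synthetic_div_row_combination) (auto simp only: synthetic_div_jac_poly_half)

lemma funpow_synthetic_div_jac_poly_mhalf:
  "((\<lambda>p. synthetic_div p 1) ^^ m) (jac_poly (-1/2) s)
     = row_combination (jac_poly (-1/2)) (mpow (mconv matPhi matT) m) s"
  by (rule funpow_synthetic_div_row_combination) (auto simp only: synthetic_div_jac_poly_mhalf_self)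

lemma funpow_Suc_synthetic_div_jac_poly_mhalf:
  "((\<lambda>p. synthetic_div p 1) ^^ Suc m) (jac_poly (-1/2) s)
     = row_combination (jac_poly (1/2)) (mconv (mpow (mconv matPhi matT) m) matPhi) s"
proof -
  have "((\<lambda>p. synthetic_div p 1) ^^ Suc m) (jac_poly (-1/2) s)
      = row_combination (\<lambda>k. synthetic_div (jac_poly (-1/2) k) 1) (mpow (mconv matPhi matT) m) s"
    by (simp only: funpow.simps comp_def funpow_synthetic_div_jac_poly_mhalf synthetic_div_row_combination)
  also have "\<dots> = row_combination (jac_poly (1/2)) (mconv (mpow (mconv matPhi matT) m) matPhi) s"
    by (simp only: synthetic_div_jac_poly_mhalf) (rule row_combination_row_combination; auto)
  finally show ?thesis .
qed

lemma row_combination_jac_poly_half: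
  "lower_triangular M \<Longrightarrow>
     row_combination (jac_poly (1/2)) M s = row_combination (jac_poly (-1/2)) (mconv M matT) s"
  by (simp add: jac_poly_half row_combination_row_combination)

section \<open>The contour integral\<close>

lemma Cauchy_integral_formula_poly:
  fixes q :: "complex poly"
  assumes "valid_path \<gamma>" "pathfinish \<gamma> = pathstart \<gamma>" "z \<notin> path_image \<gamma>"
  shows "((\<lambda>u. poly q u / (u - z)) has_contour_integral (2*pi*\<i> * winding_number \<gamma> z * poly q z)) \<gamma>"
  by (rule Cauchy_integral_formula_global[where S = UNIV]) (use assms in \<open>auto intro: poly_holomorphic_on\<close>)

lemma power_int_minus_Suc:
  fixes x :: "'a::field"
  shows "x \<noteq> 0 \<Longrightarrow> x powi (-int (Suc k)) = x powi (-int k) / x"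
  by (simp only: power_int_minus power_int_of_nat power_Suc) (simp add: divide_inverse mult.commute)

lemma has_contour_integral_power_int_minus:
  assumes \<gamma>: "valid_path \<gamma>" "pathfinish \<gamma> = pathstart \<gamma>" and a: "a \<notin> path_image \<gamma>"
  shows "((\<lambda>u. (u - a) powi (-int (Suc k))) has_contour_integral
           (if k = 0 then 2*pi*\<i> * winding_number \<gamma> a else 0)) \<gamma>"
proof (cases "k = 0")
  case True
  then show ?thesis
    using Cauchy_integral_formula_poly[OF \<gamma> a, of 1] by (simp add: power_int_minus divide_inverse)
next
  case False
  have "((\<lambda>u. (u - a) powi (-int (Suc k))) has_contour_integral 0) \<gamma>"
  proof (rule Cauchy_theorem_primitive[where S = "- {a}"])
    fix u :: complex assume "u \<in> - {a}"
    then have "((\<lambda>u. (u - a) powi (-int k) / of_int (-int k)) has_field_derivative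
        of_int (-int k) * (u - a) powi (-int k - 1) * (1 - 0) / of_int (-int k)) (at u within - {a})"
      by (intro DERIV_cdivide DERIV_power_int derivative_intros) auto
    moreover have "of_int (-int k) * (u - a) powi (-int k - 1) * (1 - 0) / of_int (-int k)
        = (u - a) powi (-int (Suc k))"
      unfolding diff_conv_add_uminus using False by (simp add: add.commute)
    ultimately show "((\<lambda>u. (u - a) powi (-int k) / of_int (-int k)) has_field_derivative
        (u - a) powi (-int (Suc k))) (at u within - {a})"
      by (simp only:)
  qed (use \<gamma> a in auto)
  with False show ?thesis by simp
qed

lemma has_contour_integral_power_int_minus_over_diff:
  assumes \<gamma>: "valid_path \<gamma>" "pathfinish \<gamma> = pathstart \<gamma>"
    and a: "a \<notin> path_image \<gamma>" and z: "z \<notin> path_image \<gamma>" "z \<noteq> a"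
    and w: "winding_number \<gamma> a = winding_number \<gamma> z"
  shows "((\<lambda>u. (u - a) powi (-int k) / (z - u)) has_contour_integral
           (if k = 0 then -(2*pi*\<i> * winding_number \<gamma> z) else 0)) \<gamma>"
proof (induction k)
  case 0
  show ?case
    using has_contour_integral_neg[OF Cauchy_integral_formula_poly[OF \<gamma> z(1), of 1]]
    by (simp add: minus_divide_right)
next
  case (Suc k)
  have pole: "((\<lambda>u. (u - a) powi (-int (Suc k))) has_contour_integral
      (if k = 0 then 2*pi*\<i> * winding_number \<gamma> z else 0)) \<gamma>"
    using has_contour_integral_power_int_minus[OF \<gamma> a, of k] unfolding w .
  have "((\<lambda>u. ((u - a) powi (-int (Suc k)) + (u - a) powi (-int k) / (z - u)) / (z - a))
      has_contour_integral 0) \<gamma>"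
    using has_contour_integral_div[OF has_contour_integral_add[OF pole Suc.IH], of "z - a"]
    by (simp split: if_splits)
  then have "((\<lambda>u. (u - a) powi (-int (Suc k)) / (z - u)) has_contour_integral 0) \<gamma>"
  proof (rule has_contour_integral_eq)
    fix u assume "u \<in> path_image \<gamma>"
    then have ne: "u - a \<noteq> 0" "z - u \<noteq> 0" "z - a \<noteq> 0" using a z by auto
    define P where "P = (u - a) powi (-int k)"
    have "P / (u - a) + P / (z - u) = P * (z - a) / ((u - a) * (z - u))"
      using ne by (simp add: field_simps)
    then show "((u - a) powi (-int (Suc k)) + (u - a) powi (-int k) / (z - u)) / (z - a)
        = (u - a) powi (-int (Suc k)) / (z - u)"
      unfolding power_int_minus_Suc[OF ne(1)] P_def[symmetric]
      using ne by (simp add: divide_divide_eq_left mult.commute)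
  qed
  then show ?case by simp
qed

lemma has_contour_integral_poly_power_int_minus_over_diff:
  fixes q :: "complex poly"
  assumes \<gamma>: "valid_path \<gamma>" "pathfinish \<gamma> = pathstart \<gamma>"
    and a: "a \<notin> path_image \<gamma>" and z: "z \<notin> path_image \<gamma>" "z \<noteq> a"
    and w: "winding_number \<gamma> a = winding_number \<gamma> z"
  shows "((\<lambda>u. poly q u * (u - a) powi (-int m) / (z - u)) has_contour_integral
           -(2*pi*\<i> * winding_number \<gamma> z) * poly (((\<lambda>p. synthetic_div p a) ^^ m) q) z) \<gamma>"
proof (induction m arbitrary: q)
  case 0
  show ?case
    using has_contour_integral_neg[OF Cauchy_integral_formula_poly[OF \<gamma> z(1), of q]]
    by (simp add: minus_divide_right)
next
  case (Suc m)
  have "((\<lambda>u. poly (synthetic_div q a) u * (u - a) powi (-int m) / (z - u)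
           + poly q a * ((u - a) powi (-int (Suc m)) / (z - u))) has_contour_integral
        -(2*pi*\<i> * winding_number \<gamma> z) * poly (((\<lambda>p. synthetic_div p a) ^^ m) (synthetic_div q a)) z
           + poly q a * 0) \<gamma>"
    using has_contour_integral_power_int_minus_over_diff[OF assms, of "Suc m"]
    by (intro has_contour_integral_add Suc.IH has_contour_integral_lmul) simp
  then have "((\<lambda>u. poly (synthetic_div q a) u * (u - a) powi (-int m) / (z - u)
           + poly q a * ((u - a) powi (-int (Suc m)) / (z - u))) has_contour_integral
        -(2*pi*\<i> * winding_number \<gamma> z) * poly (((\<lambda>p. synthetic_div p a) ^^ Suc m) q) z) \<gamma>"
    by (simp only: funpow_Suc_right comp_def mult_zero_right add_0_right)
  then show ?case
  proof (rule has_contour_integral_eq)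
    fix u assume "u \<in> path_image \<gamma>"
    then have ua: "u - a \<noteq> 0" using a by auto
    have q: "poly q u = (u - a) * poly (synthetic_div q a) u + poly q a"
      using arg_cong[OF synthetic_div_correct'[of a q], of "\<lambda>p. poly p u"] by (simp add: algebra_simps)
    show "poly (synthetic_div q a) u * (u - a) powi (-int m) / (z - u)
           + poly q a * ((u - a) powi (-int (Suc m)) / (z - u))
        = poly q u * (u - a) powi (-int (Suc m)) / (z - u)"
    proof -
      define P where "P = (u - a) powi (-int m)"
      define D where "D = poly (synthetic_div q a) u"
      have "(u - a) * D * (P / (u - a)) = D * P" using ua by simp
      then show ?thesis
        unfolding power_int_minus_Suc[OF ua] P_def[symmetric] D_def[symmetric] q
        by (simp add: distrib_right add_divide_distrib)
    qed
  qed
qed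

section \<open>Orthogonality\<close>

lemma has_integral_cos_mult_arccos:
  fixes j :: int
  shows "((\<lambda>x. cos (of_int j * arccos x) / sqrt (1 - x\<^sup>2)) has_integral (if j = 0 then pi else 0)) {-1..1}"
proof -
  define F where "F x = (if j = 0 then - arccos x else - sin (of_int j * arccos x) / of_int j)" for x
  have "((\<lambda>x. cos (of_int j * arccos x) / sqrt (1 - x\<^sup>2)) has_integral (F 1 - F (-1))) {-1..1}"
  proof (rule fundamental_theorem_of_calculus_interior)
    show "continuous_on {-1..1} F"
      unfolding F_def by (cases "j = 0") (auto intro!: continuous_intros)
  next
    fix x :: real assume x: "x \<in> {-1<..<1}"
    then have "x\<^sup>2 < 1"
      by (simp add: abs_square_less_1 abs_less_iff)
    then have "sqrt (1 - x\<^sup>2) \<noteq> 0"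
      by simp
    moreover have "(arccos has_real_derivative inverse (- sqrt (1 - x\<^sup>2))) (at x)"
      using x by (intro DERIV_arccos) auto
    ultimately have "(F has_real_derivative cos (of_int j * arccos x) / sqrt (1 - x\<^sup>2)) (at x)"
      unfolding F_def using x
      by (cases "j = 0") (auto intro!: derivative_eq_intros simp: field_simps)
    then show "(F has_vector_derivative cos (of_int j * arccos x) / sqrt (1 - x\<^sup>2)) (at x)"
      by (simp add: has_real_derivative_iff_has_vector_derivative)
  qed simp
  moreover have "F 1 - F (-1) = (if j = 0 then pi else 0)"
    unfolding F_def by (auto simp: sin_zero_iff_int2)
  ultimately show ?thesis by simp
qed

lemma has_integral_cos_arccos_product:
  "((\<lambda>x. cos (real j * arccos x) * cos (real k * arccos x) / sqrt (1 - x\<^sup>2))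
     has_integral (if k = j then pi / Wt (-1/2) j else 0)) {-1..1}"
proof -
  have "((\<lambda>x. (cos (of_int (int j + int k) * arccos x) / sqrt (1 - x\<^sup>2)
               + cos (of_int (int j - int k) * arccos x) / sqrt (1 - x\<^sup>2)) / 2)
      has_integral ((if int j + int k = 0 then pi else 0) + (if int j - int k = 0 then pi else 0)) / 2) {-1..1}"
    by (intro has_integral_divide has_integral_add has_integral_cos_mult_arccos)
  moreover have "(cos (of_int (int j + int k) * t) / r + cos (of_int (int j - int k) * t) / r) / 2
      = cos (real j * t) * cos (real k * t) / r" for t r :: real
    by (simp add: distrib_right left_diff_distrib cos_add cos_diff add_divide_distrib[symmetric])
  moreover have "((if int j + int k = 0 then pi else 0) + (if int j - int k = 0 then pi else 0)) / 2
      = (if k = j then pi / Wt (-1/2) j else 0)"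
    by (auto simp: Wt_def)
  ultimately show ?thesis by simp
qed

lemma has_integral_sin_arccos_product:
  "((\<lambda>x. 2 * sin ((real j + 1/2) * arccos x) * sin ((real k + 1/2) * arccos x) / sqrt (1 - x\<^sup>2))
     has_integral (if k = j then pi else 0)) {-1..1}"
proof -
  have "((\<lambda>x. cos (of_int (int j - int k) * arccos x) / sqrt (1 - x\<^sup>2)
               - cos (of_int (int j + int k + 1) * arccos x) / sqrt (1 - x\<^sup>2))
      has_integral ((if int j - int k = 0 then pi else 0) - (if int j + int k + 1 = 0 then pi else 0))) {-1..1}"
    by (intro has_integral_diff has_integral_cos_mult_arccos)
  moreover have "cos (of_int (int j - int k) * t) / r - cos (of_int (int j + int k + 1) * t) / r
      = 2 * sin ((real j + 1/2) * t) * sin ((real k + 1/2) * t) / r" for t r :: real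
  proof -
    have "of_int (int j - int k) * t = (real j + 1/2) * t - (real k + 1/2) * t"
      "of_int (int j + int k + 1) * t = (real j + 1/2) * t + (real k + 1/2) * t"
      by (simp_all add: algebra_simps)
    then show ?thesis
      by (simp only: cos_add cos_diff) (simp add: diff_divide_distrib[symmetric])
  qed
  moreover have "(if int j - int k = 0 then pi else 0) - (if int j + int k + 1 = 0 then pi else 0)
      = (if k = j then pi else 0)"
    by auto
  ultimately show ?thesis by simp
qed

lemma jacobi_weight_mhalf:
  "x \<in> {-1<..<1} \<Longrightarrow> (1 - x) powr (-1/2) * (1 + x) powr (-1/2) = 1 / sqrt (1 - x\<^sup>2)"
  by (simp add: powr_minus_divide powr_half_sqrt real_sqrt_mult[symmetric] power2_eq_square algebra_simps)

lemma jacobi_weight_half: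
  assumes "x \<in> {-1<..<1}"
  shows "(1 - x) powr (1/2) * (1 + x) powr (-1/2) = (1 - x) / sqrt (1 - x\<^sup>2)"
proof -
  have "(1 - x) powr (1/2) * (1 + x) powr (-1/2) = sqrt (1 - x) / sqrt (1 + x)"
    using assms by (simp add: powr_minus_divide powr_half_sqrt)
  also have "\<dots> = (sqrt (1 - x) * sqrt (1 - x)) / (sqrt (1 - x) * sqrt (1 + x))"
    using assms by (simp del: real_sqrt_mult_self)
  also have "\<dots> = (1 - x) / sqrt (1 - x\<^sup>2)"
    using assms by (simp add: real_sqrt_mult[symmetric] power2_eq_square algebra_simps)
  finally show ?thesis .
qed

lemma jac_poly_mhalf_orthogonal:
  "((\<lambda>x. poly (jac_poly (-1/2) j) (of_real x) * of_real ((1 - x) powr (-1/2) * (1 + x) powr (-1/2))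
         * poly (jac_poly (-1/2) k) (of_real x))
     has_integral (if k = j then of_real (pi / Wt (-1/2) j) else 0)) {-1..1}"
proof (rule has_integral_spike_finite[of "{-1, 1}"])
  show "((\<lambda>x. of_real (cos (real j * arccos x) * cos (real k * arccos x) / sqrt (1 - x\<^sup>2)) :: complex)
      has_integral (if k = j then of_real (pi / Wt (-1/2) j) else 0)) {-1..1}"
    using has_integral_of_real[where 'b = complex, OF has_integral_cos_arccos_product[of j k]]
    by (cases "k = j") simp_all
next
  fix x :: real assume "x \<in> {-1..1} - {-1, 1}"
  then have x: "x \<in> {-1<..<1}" by auto
  have "poly (jac_poly (-1/2) i) (of_real x) = of_real (cos (real i * arccos x))" for i
    using poly_chebyshev_cos[of i "arccos x"] x unfolding jac_poly_mhalf by simp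
  then show "poly (jac_poly (-1/2) j) (of_real x) * of_real ((1 - x) powr (-1/2) * (1 + x) powr (-1/2))
         * poly (jac_poly (-1/2) k) (of_real x)
      = of_real (cos (real j * arccos x) * cos (real k * arccos x) / sqrt (1 - x\<^sup>2))"
    unfolding jacobi_weight_mhalf[OF x] by simp
qed simp

lemma jac_poly_half_orthogonal:
  "((\<lambda>x. poly (jac_poly (1/2) j) (of_real x) * of_real ((1 - x) powr (1/2) * (1 + x) powr (-1/2))
         * poly (jac_poly (1/2) k) (of_real x))
     has_integral (if k = j then of_real (pi / Wt (1/2) j) else 0)) {-1..1}"
proof (rule has_integral_spike_finite[of "{-1, 1}"])
  show "((\<lambda>x. of_real (2 * sin ((real j + 1/2) * arccos x) * sin ((real k + 1/2) * arccos x)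
              / sqrt (1 - x\<^sup>2)) :: complex)
      has_integral (if k = j then of_real (pi / Wt (1/2) j) else 0)) {-1..1}"
    using has_integral_of_real[where 'b = complex, OF has_integral_sin_arccos_product[of j k]]
    by (cases "k = j") (simp_all add: Wt_def)
next
  fix x :: real assume "x \<in> {-1..1} - {-1, 1}"
  then have x: "x \<in> {-1<..<1}" by auto
  define t where "t = arccos x"
  have "t \<in> {0<..<pi}" "cos t = x"
    using x arccos_lt_bounded unfolding t_def by auto
  then have S: "sin (t/2) > 0" and "1 - x = 2 * (sin (t/2))\<^sup>2"
    using sin_gt_zero[of "t/2"] cos_double_sin[of "t/2"] by auto
  moreover have "poly (jac_poly (1/2) i) (of_real x) = of_real (sin ((real i + 1/2) * t) / sin (t/2))" for i
    using poly_jac_poly_half_cos[of t i] S \<open>cos t = x\<close> by simp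
  ultimately show "poly (jac_poly (1/2) j) (of_real x) * of_real ((1 - x) powr (1/2) * (1 + x) powr (-1/2))
         * poly (jac_poly (1/2) k) (of_real x)
      = of_real (2 * sin ((real j + 1/2) * arccos x) * sin ((real k + 1/2) * arccos x) / sqrt (1 - x\<^sup>2))"
    unfolding jacobi_weight_half[OF x] t_def[symmetric]
    by (simp flip: of_real_mult of_real_divide) (simp add: field_simps power2_eq_square)
qed simp

lemma jac_poly_orthogonal:
  assumes "a = -1/2 \<or> a = 1/2"
  shows "((\<lambda>x. poly (jac_poly a j) (of_real x) * of_real ((1 - x) powr a * (1 + x) powr (-1/2))
         * poly (jac_poly a k) (of_real x))
     has_integral (if k = j then of_real (pi / Wt a j) else 0)) {-1..1}"
  using assms jac_poly_mhalf_orthogonal jac_poly_half_orthogonal by blast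

lemma has_integral_row_combination:
  fixes f :: "real \<Rightarrow> complex"
  assumes M: "lower_triangular M"
    and B: "\<And>k. ((\<lambda>x. f x * poly (B k) (of_real x)) has_integral (if k = j then c else 0)) S"
  shows "((\<lambda>x. f x * poly (row_combination B M s) (of_real x)) has_integral of_real (M s j) * c) S"
proof -
  have "((\<lambda>x. \<Sum>k\<le>s. of_real (M s k) * (f x * poly (B k) (of_real x)))
      has_integral (\<Sum>k\<le>s. of_real (M s k) * (if k = j then c else 0))) S"
    by (intro has_integral_sum has_integral_mult_right B) auto
  moreover have "(\<Sum>k\<le>s. of_real (M s k) * (if k = j then c else 0)) = of_real (M s j) * c"
  proof -
    have "(\<Sum>k\<le>s. of_real (M s k) * (if k = j then c else 0))
        = (\<Sum>k\<le>s. if k = j then of_real (M s k) * c else 0)"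
      by (rule sum.cong) auto
    then show ?thesis
      using M by (auto simp: lower_triangular_def)
  qed
  moreover have "f x * poly (row_combination B M s) (of_real x)
      = (\<Sum>k\<le>s. of_real (M s k) * (f x * poly (B k) (of_real x)))" for x
    by (simp add: poly_row_combination sum_distrib_left mult_ac)
  ultimately show ?thesis by simp
qed

lemma Wt_pos: "Wt a s > 0"
  by (simp add: Wt_def)

section \<open>Evaluation of \<open>\<Gamma>\<close>\<close>

lemma contour_integral_Gam_integrand:
  assumes \<gamma>: "good_loop \<gamma>" and n: "n1 \<le> n2" and x: "x \<in> {-1..<1}"
  shows "contour_integral \<gamma> (\<lambda>u. c * J a s u * (u - 1) powi (int n1 - int n2) * d / (of_real x - u))
     = -(2*pi*\<i>) * (c * d * poly (((\<lambda>p. synthetic_div p 1) ^^ (n2 - n1)) (jac_poly a s)) (of_real x))"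
proof -
  have loop: "valid_path \<gamma>" "pathfinish \<gamma> = pathstart \<gamma>"
    and around: "\<And>y::real. y \<in> {-1..1} \<Longrightarrow> of_real y \<notin> path_image \<gamma> \<and> winding_number \<gamma> (of_real y) = 1"
    using \<gamma> unfolding good_loop_def by auto
  have pts: "1 \<notin> path_image \<gamma>" "of_real x \<notin> path_image \<gamma>" "of_real x \<noteq> (1::complex)"
    "winding_number \<gamma> 1 = winding_number \<gamma> (of_real x)" "winding_number \<gamma> (of_real x) = 1"
    using around[of 1] around[of x] x by auto
  have hc: "((\<lambda>u. c * d * (poly (jac_poly a s) u * (u - 1) powi (-int (n2 - n1)) / (of_real x - u)))
      has_contour_integral
        -(2*pi*\<i>) * (c * d * poly (((\<lambda>p. synthetic_div p 1) ^^ (n2 - n1)) (jac_poly a s)) (of_real x))) \<gamma>"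
    using has_contour_integral_lmul[OF has_contour_integral_poly_power_int_minus_over_diff[OF loop pts(1-4),
        where q = "jac_poly a s" and m = "n2 - n1"], of "c * d"] pts(5)
    by (simp add: mult_ac)
  have "int n1 - int n2 = -int (n2 - n1)"
    using n by simp
  then show ?thesis
    unfolding J_def
    by (intro contour_integral_unique has_contour_integral_eq[OF hc]) (simp only: times_divide_eq_right mult_ac)
qed

lemma Gam_eq_row_coefficient:
  assumes \<gamma>: "good_loop \<gamma>" and n: "n1 \<le> n2" and a1: "a1 = -1/2 \<or> a1 = 1/2"
    and C: "lower_triangular C"
    and div: "((\<lambda>p. synthetic_div p 1) ^^ (n2 - n1)) (jac_poly a2 s2) = row_combination (jac_poly a1) C s2"
  shows "Gam \<gamma> n1 a1 s1 n2 a2 s2 = of_real (C s2 s1)"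
proof -
  define W where "W x = poly (jac_poly a1 s1) (of_real x) * of_real ((1 - x) powr a1 * (1 + x) powr (-1/2))"
    for x
  have inner: "contour_integral \<gamma> (\<lambda>u. J a1 s1 (of_real x) * J a2 s2 u * (u - 1) powi (int n1 - int n2)
        * of_real ((1 - x) powr a1 * (1 + x) powr (-1/2)) / (of_real x - u))
      = -(2*pi*\<i>) * (W x * poly (row_combination (jac_poly a1) C s2) (of_real x))"
    if "x \<in> {-1..1} - {-1, 1}" for x
    using contour_integral_Gam_integrand[OF \<gamma> n, of x] that by (simp add: div W_def J_def)
  have "((\<lambda>x. W x * poly (row_combination (jac_poly a1) C s2) (of_real x))
      has_integral of_real (C s2 s1) * of_real (pi / Wt a1 s1)) {-1..1}"
    by (rule has_integral_row_combination[OF C]) (use jac_poly_orthogonal[OF a1] in \<open>simp add: W_def\<close>)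
  then have "integral {-1..1} (\<lambda>x. contour_integral \<gamma> (\<lambda>u. J a1 s1 (of_real x) * J a2 s2 u
        * (u - 1) powi (int n1 - int n2) * of_real ((1 - x) powr a1 * (1 + x) powr (-1/2)) / (of_real x - u)))
      = -(2*pi*\<i>) * (of_real (C s2 s1) * of_real (pi / Wt a1 s1))"
    by (intro integral_unique has_integral_spike_finite[of "{-1, 1}", OF _ inner has_integral_mult_right])
      auto
  then show ?thesis
    using Wt_pos[of a1 s1] by (simp add: Gam_def field_simps)
qed

theorem proposition4p7:
  fixes s1 s2 n1 n2 :: nat and \<gamma> :: "real \<Rightarrow> complex"
  assumes "n1 \<ge> 1" and "n2 \<ge> 1" and "good_loop \<gamma>"
  shows "(n1 \<le> n2 \<longrightarrow>
           complex_of_real (mconv (mpow (mconv matT matPhi) (n2 - n1)) matT s2 s1)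
             = Gam \<gamma> n1 (-1/2) s1 n2 (1/2) s2)
       \<and> (n1 < n2 \<longrightarrow>
           complex_of_real (mpow (mconv matT matPhi) (n2 - n1) s2 s1)
             = Gam \<gamma> n1 (1/2) s1 n2 (1/2) s2)
       \<and> (n1 < n2 \<longrightarrow>
           complex_of_real (mconv (mpow (mconv matPhi matT) (n2 - n1 - 1)) matPhi s2 s1)
             = Gam \<gamma> n1 (1/2) s1 n2 (-1/2) s2)
       \<and> (n1 < n2 \<longrightarrow>
           complex_of_real (mpow (mconv matPhi matT) (n2 - n1) s2 s1)
             = Gam \<gamma> n1 (-1/2) s1 n2 (-1/2) s2)"
proof (intro conjI impI)
  assume n: "n1 \<le> n2"
  have "((\<lambda>p. synthetic_div p 1) ^^ (n2 - n1)) (jac_poly (1/2) s2)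
      = row_combination (jac_poly (-1/2)) (mconv (mpow (mconv matT matPhi) (n2 - n1)) matT) s2"
    unfolding funpow_synthetic_div_jac_poly_half by (rule row_combination_jac_poly_half) auto
  from Gam_eq_row_coefficient[OF assms(3) n _ _ this]
  show "complex_of_real (mconv (mpow (mconv matT matPhi) (n2 - n1)) matT s2 s1)
      = Gam \<gamma> n1 (-1/2) s1 n2 (1/2) s2"
    by simp
next
  assume "n1 < n2"
  then have n: "n1 \<le> n2" and m: "n2 - n1 = Suc (n2 - n1 - 1)" by auto
  from Gam_eq_row_coefficient[OF assms(3) n _ _ funpow_synthetic_div_jac_poly_half]
  show "complex_of_real (mpow (mconv matT matPhi) (n2 - n1) s2 s1) = Gam \<gamma> n1 (1/2) s1 n2 (1/2) s2"
    by simp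
  from Gam_eq_row_coefficient[OF assms(3) n _ _
      funpow_Suc_synthetic_div_jac_poly_mhalf[of "n2 - n1 - 1", folded m]]
  show "complex_of_real (mconv (mpow (mconv matPhi matT) (n2 - n1 - 1)) matPhi s2 s1)
      = Gam \<gamma> n1 (1/2) s1 n2 (-1/2) s2"
    by simp
  from Gam_eq_row_coefficient[OF assms(3) n _ _ funpow_synthetic_div_jac_poly_mhalf]
  show "complex_of_real (mpow (mconv matPhi matT) (n2 - n1) s2 s1) = Gam \<gamma> n1 (-1/2) s1 n2 (-1/2) s2"
    by simp
qed

end
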